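(* Let $(\eta_k)_{k\ge1}$ be a sequence of real numbers and suppose there are $\varepsilon>0$, $C>0$, $D>0$, $\tilde\beta\in[0,1]$ and $k_0$ such that for all $k\ge k_0$ $$0\le\eta_k\le1-\varepsilon\quad\text{and}\quad \eta_{k+1}\le\eta_k\Big[1-\frac{C(1-\eta_k)}{k}\Big]+\frac{D}{k^{1+\tilde\beta}}.$$ Then $\limsup_{k\to\infty}\eta_k h(k)<\infty$, where $h(k)=k^{\tilde\beta}$ if $\tilde\beta<C$, $h(k)=k^{\tilde\beta}/\log k$ if $\tilde\beta=C$, and $h(k)=k^{C}$ if $\tilde\beta>C$. *)

theory Defs
  imports "HOL-Analysis.Analysis"
begin

definition rate_h :: "real \<Rightarrow> real \<Rightarrow> nat \<Rightarrow> real" where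
  "rate_h \<beta> C k =
     (if \<beta> < C then real k powr \<beta>
      else if \<beta> = C then real k powr \<beta> / ln (real k)
      else real k powr C)"

end

theory Submission
  imports Defs
begin

(*
  Idea: multiply by a polynomial weight k^gamma.  Since (k+1)^gamma <= k^gamma (1 + gamma/k),
  the weighted sequence x k = k^gamma * eta k satisfies
     x (k+1) <= (1 - (C (1 - eta k) - gamma) / k) * x k + 2 D k^(gamma - 1 - beta).
  Two elementary bounds for one-dimensional recursions are then used:
   (A) x (k+1) <= (1 - a/k) x k + b/k with a > 0 keeps x bounded;
   (B) x (k+1) <= (1 + E k^(-1-s)) x k + g k gives x k <= e^(3E/s) (x K + sum of g).
  Inside the locale perturbed_contraction we derive the weighted recursion, a first
  polynomial decay eta k = O(k^(-gamma)) for small gamma > 0 (via (A)), and then the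
  three regimes: beta < C (weight k^beta, via (A) once eta is small), beta > C and
  beta = C (weight k^C, via (B), with a convergent resp. logarithmic sum).
*)

section \<open>Elementary estimates\<close>

text \<open>Bernoulli's inequality for exponents in [0,1]; it controls the growth of the weight k^g.\<close>
lemma bernoulli_powr_le:
  fixes t g :: real
  assumes "t \<ge> 0" "0 \<le> g" "g \<le> 1"
  shows "(1 + t) powr g \<le> 1 + g * t"
  using Youngs_inequality_0[of g "1 - g" "1 + t" 1] assms by (simp add: algebra_simps)

lemma powr_neg_le_one:
  fixes x s :: real
  assumes "x \<ge> 1" "s \<ge> 0"
  shows "x powr (-s) \<le> 1"
proof -
  have "x powr s \<ge> 1" using ge_one_powr_ge_zero assms by simp
  then show ?thesis using assms by (simp add: powr_minus inverse_le_1_iff)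
qed

lemma powr_le_telescoping:
  fixes s :: real and j :: nat
  assumes s: "0 < s" "s \<le> 1" and j: "j \<ge> 1"
  shows "real j powr (-1-s) \<le> (3/s) * (real j powr (-s) - real (Suc j) powr (-s))"
proof -
  have jp: "real j \<ge> 1" using j by simp
  have ln_bound: "ln (1 + 1/real j) \<ge> 1 / (real j + 1)"
  proof -
    have "ln (real j / (real j + 1)) \<le> real j / (real j + 1) - 1"
      using jp by (intro ln_le_minus_one) simp
    moreover have "ln (real j / (real j + 1)) = - ln (1 + 1/real j)"
      using jp by (simp add: ln_div field_simps)
    moreover have "real j / (real j + 1) - 1 = - (1 / (real j + 1))"
      using jp by (simp add: field_simps)
    ultimately show ?thesis by linarith
  qed
  have pos: "1 + 1/real j > 0" using jp by (simp add: add_pos_nonneg)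
  have growth: "(1 + 1/real j) powr s \<ge> 1 + s / (real j + 1)"
  proof -
    have "(1 + 1/real j) powr s = exp (s * ln (1 + 1/real j))" using pos by (simp add: powr_def)
    also have "\<dots> \<ge> 1 + s * ln (1 + 1/real j)" by (rule exp_ge_add_one_self)
    finally show ?thesis using mult_left_mono[OF ln_bound, of s] s by simp
  qed
  have Suc_powr: "real (Suc j) powr (-s) = real j powr (-s) / (1 + 1/real j) powr s"
  proof -
    have "real (Suc j) = real j * (1 + 1/real j)" using jp by (simp add: field_simps)
    then have "real (Suc j) powr (-s) = real j powr (-s) * (1 + 1/real j) powr (-s)"
      by (simp add: powr_mult)
    then show ?thesis by (simp add: powr_minus divide_inverse)
  qed
  have "real (Suc j) powr (-s) \<le> real j powr (-s) / (1 + s / (real j + 1))"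
    unfolding Suc_powr using growth jp s pos
    by (intro divide_left_mono) (auto intro!: mult_pos_pos add_pos_nonneg)
  also have "\<dots> = real j powr (-s) * ((real j + 1) / (real j + 1 + s))"
    using jp s by (simp add: field_simps)
  finally have diff: "real j powr (-s) - real (Suc j) powr (-s) \<ge> real j powr (-s) * (s / (real j + 1 + s))"
    using jp s by (simp add: field_simps)
  have "s / (real j + 1 + s) \<ge> s / (3 * real j)"
    using jp s by (intro divide_left_mono) auto
  then have "real j powr (-s) * (s / (3 * real j)) \<le> real j powr (-s) - real (Suc j) powr (-s)"
    using diff mult_left_mono[of "s / (3 * real j)" "s / (real j + 1 + s)" "real j powr (-s)"] by simp
  then have "(3/s) * (real j powr (-s) * (s / (3 * real j)))
               \<le> (3/s) * (real j powr (-s) - real (Suc j) powr (-s))"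
    using s by (intro mult_left_mono) auto
  moreover have "(3/s) * (real j powr (-s) * (s / (3 * real j))) = real j powr (-1-s)"
    using jp s by (simp add: field_simps powr_diff powr_minus powr_add)
  ultimately show ?thesis by simp
qed

lemma inverse_le_ln_telescoping:
  fixes j :: nat
  assumes "j \<ge> 1"
  shows "1 / real j \<le> 2 * (ln (real (Suc j)) - ln (real j))"
proof -
  have jp: "real j \<ge> 1" using assms by simp
  have "ln (real j / real (Suc j)) \<le> real j / real (Suc j) - 1"
    using jp by (intro ln_le_minus_one) simp
  moreover have "ln (real j / real (Suc j)) = ln (real j) - ln (real (Suc j))"
    using jp by (simp add: ln_div)
  moreover have "real j / real (Suc j) - 1 = - 1 / (real j + 1)"
    using jp by (simp add: field_simps)
  moreover have "1 / real j \<le> 2 / (real j + 1)"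
    using jp by (simp add: field_simps)
  ultimately show ?thesis by simp
qed

lemma sum_powr_le_telescoping:
  fixes s :: real
  assumes "0 < s" "s \<le> 1" "K \<ge> 1" "k \<ge> K"
  shows "(\<Sum>j\<in>{K..<k}. real j powr (-1-s)) \<le> 3/s * (real K powr (-s) - real k powr (-s))"
  using assms(4)
proof (induction k rule: dec_induct)
  case base then show ?case by simp
next
  case (step k)
  then show ?case
    using powr_le_telescoping[OF assms(1,2), of k] assms(3) by (simp add: algebra_simps)
qed

lemma sum_inverse_le_ln:
  assumes "K \<ge> 1" "k \<ge> K"
  shows "(\<Sum>j\<in>{K..<k}. 1 / real j) \<le> 2 * (ln (real k) - ln (real K))"
  using assms(2)
proof (induction k rule: dec_induct)
  case base then show ?case by simp
next
  case (step k)
  then show ?case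
    using inverse_le_ln_telescoping[of k] assms(1) by (simp add: algebra_simps)
qed

section \<open>Two bounds for one-dimensional recursions\<close>

lemma recursion_contracting_bounded:
  fixes x :: "nat \<Rightarrow> real" and a b :: real and K :: nat
  assumes "a > 0" "b \<ge> 0" "K \<ge> 1"
    and nonneg: "\<And>k. k \<ge> K \<Longrightarrow> x k \<ge> 0"
    and rec: "\<And>k. k \<ge> K \<Longrightarrow> x (Suc k) \<le> (1 - a / real k) * x k + b / real k"
    and "k \<ge> K"
  shows "x k \<le> max (x K) (b/a + b)"
  using \<open>k \<ge> K\<close>
proof (induction k rule: dec_induct)
  case base then show ?case by simp
next
  case (step k)
  have kp: "real k \<ge> 1" using step.hyps assms(3) by simp
  have unfold: "(1 - a / real k) * x k + b / real k = x k - (a * x k - b) / real k"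
    using kp by (simp add: field_simps)
  show ?case
  proof (cases "x k \<ge> b / a")
    case True
    \<comment> \<open>above the equilibrium b/a the sequence does not increase\<close>
    then have "(a * x k - b) / real k \<ge> 0" using assms(1) kp by (simp add: field_simps)
    then show ?thesis using rec[OF step.hyps(1)] unfold step.IH by linarith
  next
    case False
    \<comment> \<open>below it, one step adds at most b\<close>
    have "a / real k * x k \<ge> 0" using assms(1) kp nonneg step.hyps by simp
    moreover have "b / real k \<le> b" using kp assms(2) by (simp add: divide_le_eq mult_le_cancel_left1)
    ultimately have "x (Suc k) \<le> x k + b" using rec[OF step.hyps(1)] by (simp add: algebra_simps)
    then show ?thesis using False by linarith
  qed
qed

text \<open>(B) A recursion with summable multiplicative growth 1 + E k^(-1-s) is controlled by
  its forcing sum; the potential y k = x k exp(3E/s k^(-s)) is nearly nonincreasing.\<close>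
lemma recursion_summable_growth_bound:
  fixes x g :: "nat \<Rightarrow> real" and s E :: real and K :: nat
  assumes s: "0 < s" "s \<le> 1" and E: "E \<ge> 0" and K: "K \<ge> 1"
    and nonneg: "\<And>k. k \<ge> K \<Longrightarrow> x k \<ge> 0"
    and g_nonneg: "\<And>k. k \<ge> K \<Longrightarrow> g k \<ge> 0"
    and rec: "\<And>k. k \<ge> K \<Longrightarrow> x (Suc k) \<le> (1 + E * real k powr (-1-s)) * x k + g k"
    and "k \<ge> K"
  shows "x k \<le> exp (3*E/s) * (x K + (\<Sum>j\<in>{K..<k}. g j))"
proof -
  define A where "A = 3*E/s"
  have A0: "A \<ge> 0" using s E by (simp add: A_def)
  have exp_le: "exp (A * real n powr (-s)) \<le> exp A" if "n \<ge> 1" for n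
    using powr_neg_le_one[of "real n" s] that s A0 by (simp add: mult_left_le)
  define y where "y k = x k * exp (A * real k powr (-s))" for k
  have y_bound: "y k \<le> y K + exp A * (\<Sum>j\<in>{K..<k}. g j)" if "k \<ge> K" for k
    using that
  proof (induction k rule: dec_induct)
    case base then show ?case by simp
  next
    case (step k)
    have kp: "real k \<ge> 1" using step.hyps K by simp
    have growth: "(1 + E * real k powr (-1-s)) * exp (A * real (Suc k) powr (-s))
                    \<le> exp (A * real k powr (-s))"
    proof -
      have "E * real k powr (-1-s) \<le> E * (3/s * (real k powr (-s) - real (Suc k) powr (-s)))"
        using powr_le_telescoping[OF s, of k] kp E by (intro mult_left_mono) auto
      also have "\<dots> = A * (real k powr (-s) - real (Suc k) powr (-s))" by (simp add: A_def)
      finally have "E * real k powr (-1-s) \<le> A * (real k powr (-s) - real (Suc k) powr (-s))" .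
      then have "E * real k powr (-1-s) + A * real (Suc k) powr (-s) \<le> A * real k powr (-s)"
        by (simp add: algebra_simps)
      then have "exp (E * real k powr (-1-s)) * exp (A * real (Suc k) powr (-s))
                   \<le> exp (A * real k powr (-s))"
        by (simp flip: exp_add)
      moreover have "1 + E * real k powr (-1-s) \<le> exp (E * real k powr (-1-s))"
        by (rule exp_ge_add_one_self)
      ultimately show ?thesis by (meson exp_gt_zero less_imp_le mult_right_mono order_trans)
    qed
    have "y (Suc k) \<le> ((1 + E * real k powr (-1-s)) * x k + g k) * exp (A * real (Suc k) powr (-s))"
      unfolding y_def using rec[OF step.hyps(1)] by (intro mult_right_mono) auto
    also have "\<dots> = ((1 + E * real k powr (-1-s)) * exp (A * real (Suc k) powr (-s))) * x k
                    + g k * exp (A * real (Suc k) powr (-s))" by (simp add: algebra_simps)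
    also have "\<dots> \<le> exp (A * real k powr (-s)) * x k + g k * exp A"
      using growth exp_le[of "Suc k"] nonneg[OF step.hyps(1)] g_nonneg[OF step.hyps(1)]
      by (intro add_mono mult_right_mono mult_left_mono) auto
    also have "\<dots> \<le> y K + exp A * (\<Sum>j\<in>{K..<Suc k}. g j)"
      using step.IH step.hyps by (simp add: y_def algebra_simps)
    finally show ?case .
  qed
  have "x k \<le> y k"
    using nonneg[OF \<open>k \<ge> K\<close>] A0 by (simp add: y_def mult_le_cancel_left1)
  also have "\<dots> \<le> y K + exp A * (\<Sum>j\<in>{K..<k}. g j)" using y_bound[OF \<open>k \<ge> K\<close>] .
  also have "y K \<le> x K * exp A"
    unfolding y_def using nonneg[of K] exp_le[OF K] by (intro mult_left_mono) auto
  finally show ?thesis by (simp add: A_def algebra_simps)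
qed

lemma weighted_step_powr:
  fixes k :: nat and \<gamma> y0 y1 c d :: real
  assumes "real k \<ge> 1" "0 \<le> \<gamma>" "\<gamma> \<le> 1" "y0 \<ge> 0" "c \<ge> 0" "d \<ge> 0" "y1 \<le> y0 * c + d"
  shows "real (Suc k) powr \<gamma> * y1 \<le> (1 + \<gamma> / real k) * c * (real k powr \<gamma> * y0) + 2 * real k powr \<gamma> * d"
proof -
  have kp: "real k > 0" using assms(1) by simp
  have "real (Suc k) = real k * (1 + 1/real k)" using kp by (simp add: field_simps)
  then have "real (Suc k) powr \<gamma> = real k powr \<gamma> * (1 + 1/real k) powr \<gamma>"
    by (simp add: powr_mult)
  also have "\<dots> \<le> real k powr \<gamma> * (1 + \<gamma> / real k)"
    using bernoulli_powr_le[of "1/real k" \<gamma>] assms kp by (intro mult_left_mono) auto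
  finally have weight: "real (Suc k) powr \<gamma> \<le> real k powr \<gamma> * (1 + \<gamma> / real k)" .
  have "1 + \<gamma> / real k \<le> 2" using assms kp by (simp add: divide_le_eq)
  then have weight2: "real (Suc k) powr \<gamma> \<le> 2 * real k powr \<gamma>"
    using weight mult_left_mono[of "1 + \<gamma> / real k" 2 "real k powr \<gamma>"] by simp
  have "real (Suc k) powr \<gamma> * y1 \<le> real (Suc k) powr \<gamma> * (y0 * c) + real (Suc k) powr \<gamma> * d"
    using mult_left_mono[OF assms(7), of "real (Suc k) powr \<gamma>"] by (simp add: distrib_left)
  also have "\<dots> \<le> (real k powr \<gamma> * (1 + \<gamma> / real k)) * (y0 * c) + 2 * real k powr \<gamma> * d"
    using weight weight2 assms by (intro add_mono mult_right_mono) auto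
  finally show ?thesis by (simp add: algebra_simps)
qed

lemma limsup_finite_if_eventually_le:
  fixes f :: "nat \<Rightarrow> real"
  assumes "\<And>k. k \<ge> K \<Longrightarrow> f k \<le> M"
  shows "limsup (\<lambda>k. ereal (f k)) < \<infinity>"
proof -
  have "eventually (\<lambda>k. ereal (f k) \<le> ereal M) sequentially"
    using assms by (auto simp: eventually_sequentially)
  then have "limsup (\<lambda>k. ereal (f k)) \<le> ereal M" by (rule Limsup_bounded)
  then show ?thesis by (rule order.strict_trans1) simp
qed

section \<open>The recursion for eta\<close>

text \<open>The hypotheses of the theorem, from a starting index K on which also 1 <= K and C <= K,
  so that the factors 1 - C (1 - eta k)/k are nonnegative.\<close>
locale perturbed_contraction =
  fixes \<eta> :: "nat \<Rightarrow> real" and \<epsilon> C D \<beta> :: real and K :: nat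
  assumes eps_pos: "\<epsilon> > 0" and C_pos: "C > 0" and D_pos: "D > 0"
    and beta_nonneg: "0 \<le> \<beta>" and beta_le_1: "\<beta> \<le> 1"
    and K_ge_1: "1 \<le> K" and K_ge_C: "C \<le> real K"
    and eta_bounds: "\<And>k. k \<ge> K \<Longrightarrow> 0 \<le> \<eta> k \<and> \<eta> k \<le> 1 - \<epsilon>"
    and eta_rec: "\<And>k. k \<ge> K \<Longrightarrow>
           \<eta> (Suc k) \<le> \<eta> k * (1 - C * (1 - \<eta> k) / real k) + D / real k powr (1 + \<beta>)"
begin

lemma eta_nonneg: "k \<ge> K \<Longrightarrow> 0 \<le> \<eta> k"
  using eta_bounds by blast

lemma weighted_recursion:
  assumes k: "k \<ge> K" and "0 \<le> \<gamma>" "\<gamma> \<le> 1"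
  shows "real (Suc k) powr \<gamma> * \<eta> (Suc k)
           \<le> (1 - (C * (1 - \<eta> k) - \<gamma>) / real k) * (real k powr \<gamma> * \<eta> k)
             + 2 * D * real k powr (\<gamma> - 1 - \<beta>)"
proof -
  define c where "c = 1 - C * (1 - \<eta> k) / real k"
  have kp: "real k \<ge> 1" "real k \<ge> C" using k K_ge_1 K_ge_C by auto
  have "C * (1 - \<eta> k) \<le> real k"
    using eta_bounds[OF k] C_pos kp mult_left_le[of "1 - \<eta> k" C] by linarith
  then have c_nonneg: "0 \<le> c" using kp by (simp add: c_def divide_le_eq)
  have c_le_1: "c \<le> 1" using eta_bounds[OF k] C_pos eps_pos by (simp add: c_def)
  have step: "real (Suc k) powr \<gamma> * \<eta> (Suc k)
      \<le> (1 + \<gamma> / real k) * c * (real k powr \<gamma> * \<eta> k) + 2 * real k powr \<gamma> * (D / real k powr (1 + \<beta>))"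
    using weighted_step_powr[of k \<gamma> "\<eta> k" c "D / real k powr (1 + \<beta>)"] assms kp c_nonneg
      eta_bounds[OF k] eta_rec[OF k] D_pos by (simp add: c_def)
  have "(1 + \<gamma> / real k) * c \<le> c + \<gamma> / real k"
    using mult_left_le[OF c_le_1, of "\<gamma> / real k"] assms kp by (simp add: distrib_right)
  also have "\<dots> = 1 - (C * (1 - \<eta> k) - \<gamma>) / real k"
    by (simp add: c_def diff_divide_distrib)
  finally have "(1 + \<gamma> / real k) * c * (real k powr \<gamma> * \<eta> k)
                  \<le> (1 - (C * (1 - \<eta> k) - \<gamma>) / real k) * (real k powr \<gamma> * \<eta> k)"
    using eta_nonneg[OF k] by (intro mult_right_mono) auto
  moreover have "2 * real k powr \<gamma> * (D / real k powr (1 + \<beta>)) = 2 * D * real k powr (\<gamma> - 1 - \<beta>)"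
    using kp by (simp add: powr_diff field_simps)
  ultimately show ?thesis using step by linarith
qed

lemma weighted_bounded:
  assumes "0 \<le> \<gamma>" "\<gamma> \<le> \<beta>" "a > 0" "K' \<ge> K"
    and rate: "\<And>k. k \<ge> K' \<Longrightarrow> a \<le> C * (1 - \<eta> k) - \<gamma>"
  shows "\<exists>B. \<forall>k\<ge>K'. real k powr \<gamma> * \<eta> k \<le> B"
proof -
  define x where "x k = real k powr \<gamma> * \<eta> k" for k
  have step: "x (Suc k) \<le> (1 - a / real k) * x k + 2 * D / real k" if k: "k \<ge> K'" for k
  proof -
    have kK: "k \<ge> K" and kp: "real k \<ge> 1" using k assms(4) K_ge_1 by auto
    have "(1 - (C * (1 - \<eta> k) - \<gamma>) / real k) * x k \<le> (1 - a / real k) * x k"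
      using rate[OF k] kp eta_nonneg[OF kK]
      by (intro mult_right_mono) (auto simp: x_def divide_right_mono)
    moreover have "2 * D * real k powr (\<gamma> - 1 - \<beta>) \<le> 2 * D / real k"
    proof -
      have "real k powr (\<gamma> - 1 - \<beta>) \<le> real k powr (-1)"
        using kp assms by (intro powr_mono) auto
      then show ?thesis using kp D_pos by (simp add: powr_minus divide_inverse)
    qed
    ultimately show ?thesis
      using weighted_recursion[OF kK assms(1)] assms(2) beta_le_1 unfolding x_def by linarith
  qed
  have "x k \<le> max (x K') (2 * D / a + 2 * D)" if "k \<ge> K'" for k
    using recursion_contracting_bounded[of a "2 * D" K' x k] assms(3,4) K_ge_1 D_pos
      eta_nonneg step that by (auto simp: x_def)
  then show ?thesis unfolding x_def by blast
qed

lemma eta_polynomial_decay: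
  "\<exists>B. \<forall>k\<ge>K. \<eta> k \<le> B * real k powr (- min \<beta> (C * \<epsilon> / 2))"
proof -
  define \<gamma> where "\<gamma> = min \<beta> (C * \<epsilon> / 2)"
  have "C * \<epsilon> / 2 \<le> C * (1 - \<eta> k) - \<gamma>" if "k \<ge> K" for k
  proof -
    have "C * \<epsilon> \<le> C * (1 - \<eta> k)" using eta_bounds[OF that] C_pos by simp
    then show ?thesis by (simp add: \<gamma>_def)
  qed
  then obtain B where B: "\<And>k. k \<ge> K \<Longrightarrow> real k powr \<gamma> * \<eta> k \<le> B"
    using weighted_bounded[of \<gamma> "C * \<epsilon> / 2" K] beta_nonneg C_pos eps_pos
    by (auto simp: \<gamma>_def)
  have "\<eta> k \<le> B * real k powr (-\<gamma>)" if "k \<ge> K" for k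
  proof -
    have "\<eta> k = (real k powr \<gamma> * \<eta> k) * real k powr (-\<gamma>)"
      using that K_ge_1 by (simp add: powr_minus)
    with mult_right_mono[OF B[OF that] powr_ge_zero, of k "-\<gamma>"] show ?thesis by linarith
  qed
  then show ?thesis unfolding \<gamma>_def by blast
qed

lemma eta_eventually_small:
  assumes "\<beta> > 0" "\<delta> > 0"
  shows "eventually (\<lambda>k. \<eta> k \<le> \<delta>) sequentially"
proof -
  define \<gamma> where "\<gamma> = min \<beta> (C * \<epsilon> / 2)"
  have "\<gamma> > 0" using assms C_pos eps_pos by (simp add: \<gamma>_def)
  obtain B where B: "\<And>k. k \<ge> K \<Longrightarrow> \<eta> k \<le> B * real k powr (-\<gamma>)"
    using eta_polynomial_decay unfolding \<gamma>_def by blast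
  have "((\<lambda>k. B * real k powr (-\<gamma>)) \<longlongrightarrow> 0) sequentially"
    using \<open>\<gamma> > 0\<close> by (intro tendsto_mult_right_zero tendsto_neg_powr filterlim_real_sequentially) auto
  from order_tendstoD(2)[OF this assms(2)] eventually_ge_at_top[of K]
  show ?thesis by eventually_elim (use B in force)
qed

text \<open>Subcritical regime beta < C: k^beta eta k is bounded.  For beta = 0 the rate C eps
  suffices; for beta > 0 we wait until C eta k <= (C - beta)/2.\<close>
lemma bounded_below_critical:
  assumes "\<beta> < C"
  shows "\<exists>K' B. \<forall>k\<ge>K'. real k powr \<beta> * \<eta> k \<le> B"
proof (cases "\<beta> = 0")
  case True
  have "C * \<epsilon> \<le> C * (1 - \<eta> k) - \<beta>" if "k \<ge> K" for k
    using eta_bounds[OF that] C_pos True by simp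
  then have "\<exists>B. \<forall>k\<ge>K. real k powr \<beta> * \<eta> k \<le> B"
    using weighted_bounded[of \<beta> "C * \<epsilon>" K] True C_pos eps_pos by simp
  then show ?thesis by blast
next
  case False
  define \<delta> where "\<delta> = (C - \<beta>) / (2 * C)"
  have "\<delta> > 0" using assms C_pos by (simp add: \<delta>_def)
  then obtain K2 where K2: "\<And>k. k \<ge> K2 \<Longrightarrow> \<eta> k \<le> \<delta>"
    using eta_eventually_small[of \<delta>] False beta_nonneg by (auto simp: eventually_sequentially)
  have "(C - \<beta>) / 2 \<le> C * (1 - \<eta> k) - \<beta>" if "k \<ge> max K K2" for k
  proof -
    have "C * \<eta> k \<le> C * \<delta>" using K2[of k] that C_pos by simp
    also have "\<dots> = (C - \<beta>) / 2" using C_pos by (simp add: \<delta>_def)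
    finally show ?thesis by (simp add: right_diff_distrib)
  qed
  then have "\<exists>B. \<forall>k\<ge>max K K2. real k powr \<beta> * \<eta> k \<le> B"
    using weighted_bounded[of \<beta> "(C - \<beta>) / 2" "max K K2"] assms beta_nonneg by simp
  then show ?thesis by blast
qed

text \<open>Regime C <= beta: with the weight k^C the contraction vanishes and only the
  summable excess C eta k / k = O(k^(-1-gamma)) remains, so bound (B) applies.\<close>
lemma weighted_by_forcing_sum:
  assumes "C \<le> \<beta>"
  shows "\<exists>A B. 0 \<le> A \<and> 0 \<le> B \<and>
           (\<forall>k\<ge>K. real k powr C * \<eta> k \<le> A + B * (\<Sum>j\<in>{K..<k}. real j powr (C - 1 - \<beta>)))"
proof -
  define \<gamma> where "\<gamma> = min \<beta> (C * \<epsilon> / 2)"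
  have \<gamma>: "0 < \<gamma>" "\<gamma> \<le> 1" using assms C_pos eps_pos beta_le_1 by (auto simp: \<gamma>_def)
  obtain B1 where B1: "\<And>k. k \<ge> K \<Longrightarrow> \<eta> k \<le> B1 * real k powr (-\<gamma>)"
    using eta_polynomial_decay unfolding \<gamma>_def by blast
  have "0 \<le> B1 * real K powr (-\<gamma>)" using B1[of K] eta_nonneg[of K] by simp
  then have B1_nonneg: "0 \<le> B1" using K_ge_1 by (simp add: zero_le_mult_iff)
  define x where "x k = real k powr C * \<eta> k" for k
  define E where "E = C * B1"
  have step: "x (Suc k) \<le> (1 + E * real k powr (-1-\<gamma>)) * x k + 2 * D * real k powr (C - 1 - \<beta>)"
    if k: "k \<ge> K" for k
  proof -
    have kp: "real k \<ge> 1" using k K_ge_1 by simp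
    have "1 - (C * (1 - \<eta> k) - C) / real k = 1 + C * \<eta> k / real k" by (simp add: algebra_simps)
    also have "\<dots> \<le> 1 + E * real k powr (-1-\<gamma>)"
    proof -
      have "C * \<eta> k / real k \<le> C * (B1 * real k powr (-\<gamma>)) / real k"
        using B1[OF k] C_pos kp by (simp add: divide_right_mono)
      also have "\<dots> = E * real k powr (-1-\<gamma>)"
        using kp by (simp add: E_def powr_diff powr_minus divide_inverse powr_add)
      finally show ?thesis by simp
    qed
    finally show ?thesis
      using weighted_recursion[OF k, of C] C_pos assms beta_le_1 eta_nonneg[OF k]
        mult_right_mono[of "1 - (C * (1 - \<eta> k) - C) / real k" _ "x k"]
      unfolding x_def by fastforce
  qed
  define M where "M = exp (3 * E / \<gamma>)"
  have "x k \<le> M * (x K + (\<Sum>j\<in>{K..<k}. 2 * D * real j powr (C - 1 - \<beta>)))" if "k \<ge> K" for k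
    unfolding M_def
    using recursion_summable_growth_bound[of \<gamma> E K x "\<lambda>j. 2 * D * real j powr (C - 1 - \<beta>)" k]
      \<gamma> C_pos B1_nonneg K_ge_1 eta_nonneg step that D_pos by (auto simp: E_def x_def)
  then have "\<forall>k\<ge>K. x k \<le> M * x K + (M * 2 * D) * (\<Sum>j\<in>{K..<k}. real j powr (C - 1 - \<beta>))"
    by (simp add: sum_distrib_left algebra_simps)
  moreover have "0 \<le> M * x K" "0 \<le> M * 2 * D"
    using eta_nonneg[of K] D_pos by (auto simp: M_def x_def)
  ultimately show ?thesis unfolding x_def by blast
qed

text \<open>Supercritical regime beta > C: the forcing sum converges, k^C eta k is bounded.\<close>
lemma bounded_above_critical:
  assumes "C < \<beta>"
  shows "\<exists>M. \<forall>k\<ge>K. real k powr C * \<eta> k \<le> M"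
proof -
  obtain A B where AB: "0 \<le> B"
    "\<And>k. k \<ge> K \<Longrightarrow> real k powr C * \<eta> k \<le> A + B * (\<Sum>j\<in>{K..<k}. real j powr (C - 1 - \<beta>))"
    using weighted_by_forcing_sum assms by auto
  define s where "s = \<beta> - C"
  have s: "0 < s" "s \<le> 1" using assms C_pos beta_le_1 by (auto simp: s_def)
  have exponent: "C - 1 - \<beta> = -1 - s" by (simp add: s_def)
  have "(\<Sum>j\<in>{K..<k}. real j powr (C - 1 - \<beta>)) \<le> 3 / s" if "k \<ge> K" for k
  proof -
    have "(\<Sum>j\<in>{K..<k}. real j powr (C - 1 - \<beta>)) \<le> 3/s * (real K powr (-s) - real k powr (-s))"
      unfolding exponent by (rule sum_powr_le_telescoping[OF s K_ge_1 that])
    also have "\<dots> \<le> 3/s * 1"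
    proof -
      have "real K powr (-s) \<le> 1" using K_ge_1 s by (intro powr_neg_le_one) auto
      then have "real K powr (-s) - real k powr (-s) \<le> 1"
        using powr_ge_zero[of "real k" "-s"] by linarith
      then show ?thesis using s by (intro mult_left_mono) auto
    qed
    finally show ?thesis by simp
  qed
  then have "\<forall>k\<ge>K. real k powr C * \<eta> k \<le> A + B * (3 / s)"
    using AB by (meson mult_left_mono add_left_mono order_trans)
  then show ?thesis by blast
qed

text \<open>Critical regime beta = C: the forcing sum grows like ln k.\<close>
lemma bounded_at_critical:
  assumes "\<beta> = C"
  shows "\<exists>K' M. \<forall>k\<ge>K'. real k powr C * \<eta> k \<le> M * ln (real k)"
proof -
  obtain A B where AB: "0 \<le> A" "0 \<le> B"
    "\<And>k. k \<ge> K \<Longrightarrow> real k powr C * \<eta> k \<le> A + B * (\<Sum>j\<in>{K..<k}. real j powr (C - 1 - \<beta>))"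
    using weighted_by_forcing_sum assms by auto
  have "filterlim (\<lambda>k::nat. ln (real k)) at_top sequentially"
    by (rule filterlim_compose[OF ln_at_top filterlim_real_sequentially])
  then obtain K4 where K4: "\<And>k. k \<ge> K4 \<Longrightarrow> ln (real k) \<ge> 1"
    by (auto simp: filterlim_at_top eventually_sequentially)
  have "real k powr C * \<eta> k \<le> (A + 2 * B) * ln (real k)" if k: "k \<ge> max K K4" for k
  proof -
    have kK: "k \<ge> K" and lk: "ln (real k) \<ge> 1" using k K4 by auto
    have "(\<Sum>j\<in>{K..<k}. real j powr (C - 1 - \<beta>)) = (\<Sum>j\<in>{K..<k}. 1 / real j)"
      using assms K_ge_1 by (intro sum.cong) (auto simp: powr_minus divide_inverse)
    also have "\<dots> \<le> 2 * (ln (real k) - ln (real K))" by (rule sum_inverse_le_ln[OF K_ge_1 kK])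
    also have "\<dots> \<le> 2 * ln (real k)" using K_ge_1 by simp
    finally have "B * (\<Sum>j\<in>{K..<k}. real j powr (C - 1 - \<beta>)) \<le> B * (2 * ln (real k))"
      using AB by (intro mult_left_mono)
    moreover have "A \<le> A * ln (real k)" using mult_left_mono[OF lk AB(1)] by simp
    ultimately have "A + B * (\<Sum>j\<in>{K..<k}. real j powr (C - 1 - \<beta>)) \<le> A * ln (real k) + B * (2 * ln (real k))"
      by linarith
    then show ?thesis using AB(3)[OF kK] by (simp add: algebra_simps)
  qed
  then show ?thesis by blast
qed

lemma rate_h_bounded: "\<exists>K' M. \<forall>k\<ge>K'. \<eta> k * rate_h \<beta> C k \<le> M"
proof -
  consider (below) "\<beta> < C" | (critical) "\<beta> = C" | (above) "C < \<beta>" by linarith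
  then show ?thesis
  proof cases
    case below
    then show ?thesis using bounded_below_critical by (simp add: rate_h_def mult.commute)
  next
    case critical
    then obtain K' M where KM: "\<And>k. k \<ge> K' \<Longrightarrow> real k powr C * \<eta> k \<le> M * ln (real k)"
      using bounded_at_critical by blast
    have "\<eta> k * rate_h \<beta> C k \<le> M" if "k \<ge> max K' 3" for k
    proof -
      have "ln (real k) > 0" using that by simp
      then show ?thesis
        using KM[of k] that critical by (simp add: rate_h_def pos_divide_le_eq mult.commute)
    qed
    then show ?thesis by blast
  next
    case above
    then show ?thesis using bounded_above_critical by (auto simp: rate_h_def mult.commute)
  qed
qed

end

theorem mainTheorem11:
  fixes \<eta> :: "nat \<Rightarrow> real" and \<epsilon> C D \<beta> :: real and k0 :: nat
  assumes "\<epsilon> > 0" and "C > 0" and "D > 0" and "0 \<le> \<beta>" and "\<beta> \<le> 1"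
    and "\<And>k. k \<ge> k0 \<Longrightarrow> 0 \<le> \<eta> k \<and> \<eta> k \<le> 1 - \<epsilon>"
    and "\<And>k. k \<ge> k0 \<Longrightarrow>
           \<eta> (Suc k) \<le> \<eta> k * (1 - C * (1 - \<eta> k) / real k) + D / real k powr (1 + \<beta>)"
  shows "limsup (\<lambda>k. ereal (\<eta> k * rate_h \<beta> C k)) < \<infinity>"
proof -
  define K where "K = max k0 (max 1 (nat \<lceil>C\<rceil>))"
  interpret perturbed_contraction \<eta> \<epsilon> C D \<beta> K
    using assms by unfold_locales (auto simp: K_def, linarith)
  obtain K' M where "\<And>k. k \<ge> K' \<Longrightarrow> \<eta> k * rate_h \<beta> C k \<le> M"
    using rate_h_bounded by blast
  then show ?thesis by (rule limsup_finite_if_eventually_le)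
qed

end
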